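(* For each $n$ let $\rho^{(n)}$ be a state and $X^{(n)}=(X^{(n)}_1,\dots,X^{(n)}_d)$ observables on a finite-dimensional Hilbert space, let $W^{(n)}(\xi):=e^{\sqrt{-1}\xi^iX^{(n)}_i}$ for $\xi\in\mathbb R^d$, and assume $(X^{(n)},\rho^{(n)})\rightsquigarrow N(0,J)$ for a complex positive semidefinite $d\times d$ matrix $J$. Then, with $S:=\mathrm{Im}\,J$, $\lim_{n\to\infty}\big\|W^{(n)}(\xi)W^{(n)}(\eta)\sqrt{\rho^{(n)}}-e^{\sqrt{-1}\xi^\top S\eta}W^{(n)}(\xi+\eta)\sqrt{\rho^{(n)}}\big\|_{\mathrm{HS}}=0$ for all $\xi,\eta\in\mathbb R^d$, where $\|\cdot\|_{\mathrm{HS}}$ is the Hilbert–Schmidt norm.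
   Context: Summation convention. $N(0,J)$ is the quantum Gaussian state on $\mathrm{CCR}(\mathrm{Im}J)$ (generated by $e^{\sqrt{-1}\xi^iX_i}$ with $e^{\sqrt{-1}\xi^iX_i}e^{\sqrt{-1}\eta^jX_j}=e^{\sqrt{-1}\xi^\top(\mathrm{Im}J)\eta}e^{\sqrt{-1}(\xi+\eta)^iX_i}$) with $\phi(\prod_{t=1}^Te^{\sqrt{-1}\xi_t^iX_i})=\exp(-\tfrac12\sum_t\xi_t^i\xi_t^jJ_{ji}-\sum_{t<u}\xi_t^i\xi_u^jJ_{ji})$; $(X^{(n)},\rho^{(n)})\rightsquigarrow N(0,J)$ means $\mathrm{Tr}\,\rho^{(n)}\prod_te^{\sqrt{-1}\xi_t^iX^{(n)}_i}$ converges to these values for all $T$ and $\xi_1,\dots,\xi_T\in\mathbb R^d$. *)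

theory Defs
  imports Complex_Main "Jordan_Normal_Form.Matrix"
begin

text \<open>Vectors xi in R^d are represented as
functions nat => real of which only the components i < d are used.\<close>

definition adj :: "complex mat \<Rightarrow> complex mat" where
  "adj A = mat (dim_col A) (dim_row A) (\<lambda>(i,j). cnj (A $$ (j,i)))"

definition hermitian :: "complex mat \<Rightarrow> bool" where
  "hermitian A \<longleftrightarrow> dim_row A = dim_col A \<and> adj A = A"

definition qform :: "complex mat \<Rightarrow> (nat \<Rightarrow> complex) \<Rightarrow> complex" where
  "qform A v = (\<Sum>i<dim_row A. \<Sum>j<dim_col A. cnj (v i) * A $$ (i,j) * v j)"

definition psd :: "complex mat \<Rightarrow> bool" where
  "psd A \<longleftrightarrow> hermitian A \<and> (\<forall>v. qform A v \<in> \<real> \<and> Re (qform A v) \<ge> 0)"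

definition mtrace :: "complex mat \<Rightarrow> complex" where
  "mtrace A = (\<Sum>i<dim_row A. A $$ (i,i))"

definition is_state :: "complex mat \<Rightarrow> bool" where
  "is_state \<rho> \<longleftrightarrow> psd \<rho> \<and> mtrace \<rho> = 1"

definition mat_exp :: "complex mat \<Rightarrow> complex mat" where
  "mat_exp A = mat (dim_row A) (dim_col A)
     (\<lambda>(i,j). \<Sum>k. (A ^\<^sub>m k) $$ (i,j) / of_nat (fact k))"

definition mat_sqrt :: "complex mat \<Rightarrow> complex mat" where
  "mat_sqrt A = (THE B. B \<in> carrier_mat (dim_row A) (dim_row A) \<and> psd B \<and> B * B = A)"

definition hs_norm :: "complex mat \<Rightarrow> real" where
  "hs_norm A = sqrt (\<Sum>i<dim_row A. \<Sum>j<dim_col A. (cmod (A $$ (i,j)))\<^sup>2)"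

definition weyl :: "nat \<Rightarrow> nat \<Rightarrow> (nat \<Rightarrow> complex mat) \<Rightarrow> (nat \<Rightarrow> real) \<Rightarrow> complex mat" where
  "weyl d m X \<xi> = mat_exp (foldr (\<lambda>i M. ((\<i> * complex_of_real (\<xi> i)) \<cdot>\<^sub>m X i) + M) [0..<d] (0\<^sub>m m m))"

definition weyl_prod :: "nat \<Rightarrow> nat \<Rightarrow> (nat \<Rightarrow> complex mat) \<Rightarrow> (nat \<Rightarrow> real) list \<Rightarrow> complex mat" where
  "weyl_prod d m X \<xi>s = foldr (\<lambda>\<xi> M. weyl d m X \<xi> * M) \<xi>s (1\<^sub>m m)"

definition bil :: "nat \<Rightarrow> complex mat \<Rightarrow> (nat \<Rightarrow> real) \<Rightarrow> (nat \<Rightarrow> real) \<Rightarrow> complex" where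
  "bil d J \<xi> \<eta> = (\<Sum>i<d. \<Sum>j<d. complex_of_real (\<xi> i) * complex_of_real (\<eta> j) * J $$ (j,i))"

text \<open>Value of the quantum Gaussian state N(0,J) on a product of Weyl operators.\<close>
definition gauss_val :: "nat \<Rightarrow> complex mat \<Rightarrow> (nat \<Rightarrow> real) list \<Rightarrow> complex" where
  "gauss_val d J \<xi>s = exp (- (1/2) * (\<Sum>t<length \<xi>s. bil d J (\<xi>s ! t) (\<xi>s ! t))
      - (\<Sum>t<length \<xi>s. \<Sum>u<length \<xi>s. if t < u then bil d J (\<xi>s ! t) (\<xi>s ! u) else 0))"

text \<open>Quantum local asymptotic normality-type convergence (X^(n), rho^(n)) ~> N(0,J).\<close>
definition qconv :: "nat \<Rightarrow> (nat \<Rightarrow> nat) \<Rightarrow> (nat \<Rightarrow> nat \<Rightarrow> complex mat) \<Rightarrow> (nat \<Rightarrow> complex mat) \<Rightarrow> complex mat \<Rightarrow> bool" where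
  "qconv d m X \<rho> J \<longleftrightarrow> (\<forall>\<xi>s. (\<lambda>n. mtrace (\<rho> n * weyl_prod d (m n) (X n) \<xi>s))
       \<longlonglongrightarrow> gauss_val d J \<xi>s)"

end

theory Submission
  imports Defs "Jordan_Normal_Form.Schur_Decomposition"
begin

text \<open>
  Put \<open>c = exp (\<i> \<xi>\<^sup>T S \<eta>)\<close> and \<open>M = W(\<xi>) W(\<eta>) - c W(\<xi> + \<eta>)\<close>. Since
  \<open>\<rho>\<^sup>1\<^sup>/\<^sup>2\<close> is Hermitian with square \<open>\<rho>\<close>, the squared Hilbert-Schmidt norm of
  \<open>M \<rho>\<^sup>1\<^sup>/\<^sup>2\<close> is \<open>Tr \<rho> M\<^sup>* M\<close>, and since \<open>W(\<xi>)\<^sup>* = W(-\<xi>)\<close> this is a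
  combination of the four expectations \<open>Tr \<rho> W(-\<eta>) W(-\<xi>) W(\<xi>) W(\<eta>)\<close>,
  \<open>Tr \<rho> W(-\<eta>) W(-\<xi>) W(\<xi>+\<eta>)\<close>, \<open>Tr \<rho> W(-\<xi>-\<eta>) W(\<xi>) W(\<eta>)\<close> and
  \<open>Tr \<rho> W(-\<xi>-\<eta>) W(\<xi>+\<eta>)\<close>. By the convergence to \<open>N(0,J)\<close> these tend to
  \<open>1\<close>, \<open>c\<^sup>*\<close>, \<open>c\<close> and \<open>1\<close>, so the squared norm tends to \<open>1 - |c|\<^sup>2 = 0\<close>.

  The two matrix facts used, existence and uniqueness of the positive square root and
  \<open>W(\<xi>)\<^sup>* = W(-\<xi>)\<close>, rest on a functional calculus: a real polynomial vanishing
  on the spectrum of a Hermitian matrix \<open>A\<close> annihilates \<open>A\<close>, because by the Schur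
  decomposition it maps \<open>A\<close> to a nilpotent Hermitian matrix.
\<close>

section \<open>Matrix algebra\<close>

lemma pow_mat_Suc_left: assumes "A \<in> carrier_mat n n" shows "A ^\<^sub>m Suc k = A * A ^\<^sub>m k"
proof (induction k)
  case 0 then show ?case using assms by simp
next
  case (Suc k)
  have "A ^\<^sub>m Suc (Suc k) = (A * A ^\<^sub>m k) * A" using Suc by simp
  also have "\<dots> = A * (A ^\<^sub>m k * A)" using assms by (intro assoc_mult_mat, auto)
  finally show ?case by simp
qed

lemma pow_mat_add: assumes "A \<in> carrier_mat n n" shows "A ^\<^sub>m (k + l) = A ^\<^sub>m k * A ^\<^sub>m l"
proof (induction l)
  case 0 then show ?case using assms by simp
next
  case (Suc l)
  have "A ^\<^sub>m (k + Suc l) = (A ^\<^sub>m k * A ^\<^sub>m l) * A" using Suc by simp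
  also have "\<dots> = A ^\<^sub>m k * (A ^\<^sub>m l * A)" using assms by (intro assoc_mult_mat, auto)
  finally show ?case by simp
qed

text \<open>Variants of the library's laws with hypotheses on dimensions instead of carriers,
  which the simplifier can discharge.\<close>

lemma assoc_mult_mat_dim:
  "dim_col A = dim_row B \<Longrightarrow> dim_col B = dim_row C \<Longrightarrow> (A * B) * C = A * (B * C)"
  by (rule assoc_mult_mat[OF carrier_matI[OF refl refl] carrier_matI[OF _ refl] carrier_matI[OF _ refl]]) auto

lemma add_mult_distrib_mat_dim: "dim_row A = dim_row B \<Longrightarrow> dim_col A = dim_col B \<Longrightarrow>
    dim_col A = dim_row C \<Longrightarrow> (A + B) * C = A * C + B * C"
  by (rule add_mult_distrib_mat[OF carrier_matI[OF refl refl] carrier_matI carrier_matI[OF _ refl]]) auto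

lemma mult_add_distrib_mat_dim: "dim_row B = dim_row C \<Longrightarrow> dim_col B = dim_col C \<Longrightarrow>
    dim_col A = dim_row B \<Longrightarrow> A * (B + C) = A * B + A * C"
  by (rule mult_add_distrib_mat[OF carrier_matI[OF refl refl] carrier_matI[OF _ refl] carrier_matI]) auto

lemma minus_mult_distrib_mat_dim: "dim_row A = dim_row B \<Longrightarrow> dim_col A = dim_col B \<Longrightarrow>
    dim_col A = dim_row C \<Longrightarrow> (A - B) * C = A * C - B * (C :: 'a :: comm_ring mat)"
  by (intro eq_matI) (auto simp: scalar_prod_def algebra_simps sum_subtractf)

lemma mult_minus_distrib_mat_dim: "dim_row B = dim_row C \<Longrightarrow> dim_col B = dim_col C \<Longrightarrow>
    dim_col A = dim_row B \<Longrightarrow> A * (B - C) = A * B - A * (C :: 'a :: comm_ring mat)"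
  by (intro eq_matI) (auto simp: scalar_prod_def algebra_simps sum_subtractf)

lemma mult_smult_assoc_mat_dim:
  "dim_col A = dim_row B \<Longrightarrow> (c \<cdot>\<^sub>m A) * B = (c :: 'a :: comm_ring) \<cdot>\<^sub>m (A * B)"
  by (rule mult_smult_assoc_mat[OF carrier_matI[OF refl refl] carrier_matI[OF _ refl]]) auto

lemma mult_smult_distrib_dim:
  "dim_col A = dim_row B \<Longrightarrow> A * (c \<cdot>\<^sub>m B) = (c :: 'a :: comm_ring) \<cdot>\<^sub>m (A * B)"
  by (rule mult_smult_distrib[OF carrier_matI[OF refl refl] carrier_matI[OF _ refl]]) auto

lemma left_add_zero_mat_dim:
  "dim_row B = nr \<Longrightarrow> dim_col B = nc \<Longrightarrow> 0\<^sub>m nr nc + B = (B :: 'a :: monoid_add mat)"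
  by (intro eq_matI) auto

lemma right_add_zero_mat_dim:
  "dim_row B = nr \<Longrightarrow> dim_col B = nc \<Longrightarrow> B + 0\<^sub>m nr nc = (B :: 'a :: monoid_add mat)"
  by (intro eq_matI) auto

lemmas mat_arith_dim = assoc_mult_mat_dim add_mult_distrib_mat_dim mult_add_distrib_mat_dim
  minus_mult_distrib_mat_dim mult_minus_distrib_mat_dim mult_smult_assoc_mat_dim
  mult_smult_distrib_dim left_add_zero_mat_dim right_add_zero_mat_dim

lemma one_smult_mat [simp]: "(1 :: 'a :: monoid_mult) \<cdot>\<^sub>m A = A"
  by (intro eq_matI) auto

lemma adj_carrier [simp]: "A \<in> carrier_mat n m \<Longrightarrow> adj A \<in> carrier_mat m n"
  by (auto simp: adj_def)

lemma adj_dim [simp]: "dim_row (adj A) = dim_col A" "dim_col (adj A) = dim_row A"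
  by (auto simp: adj_def)

lemma adj_index [simp]: "i < dim_col A \<Longrightarrow> j < dim_row A \<Longrightarrow> adj A $$ (i,j) = cnj (A $$ (j,i))"
  by (auto simp: adj_def)

lemma adj_adj [simp]: "adj (adj A) = A"
  by (intro eq_matI) auto

lemma adj_mult: assumes "A \<in> carrier_mat n k" "B \<in> carrier_mat k m"
  shows "adj (A * B) = adj B * adj A"
  using assms by (intro eq_matI) (auto simp: scalar_prod_def mult.commute)

lemma adj_add: assumes "A \<in> carrier_mat n m" "B \<in> carrier_mat n m"
  shows "adj (A + B) = adj A + adj B"
  using assms by (intro eq_matI) auto

lemma adj_minus: assumes "A \<in> carrier_mat n m" "B \<in> carrier_mat n m"
  shows "adj (A - B) = adj A - adj B"
  using assms by (intro eq_matI) auto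

lemma adj_smult: "adj (c \<cdot>\<^sub>m A) = cnj c \<cdot>\<^sub>m adj A"
  by (intro eq_matI) auto

lemma adj_one [simp]: "adj (1\<^sub>m n) = 1\<^sub>m n"
  by (intro eq_matI) auto

lemma adj_zero [simp]: "adj (0\<^sub>m n m) = 0\<^sub>m m n"
  by (intro eq_matI) auto

lemma adj_pow: assumes A: "A \<in> carrier_mat n n" shows "adj (A ^\<^sub>m k) = adj A ^\<^sub>m k"
proof (induction k)
  case (Suc k)
  have "adj (A ^\<^sub>m Suc k) = adj A * adj (A ^\<^sub>m k)" using adj_mult[OF pow_carrier_mat[OF A] A] by simp
  also have "\<dots> = adj A ^\<^sub>m Suc k" using Suc pow_mat_Suc_left[OF adj_carrier[OF A]] by simp
  finally show ?case .
qed (use A in auto)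

lemma adj_mult_self_eq_zero: assumes H: "H \<in> carrier_mat n m" and z: "adj H * H = 0\<^sub>m m m"
  shows "H = 0\<^sub>m n m"
proof (rule eq_matI)
  fix i j assume i: "i < dim_row (0\<^sub>m n m)" and j: "j < dim_col (0\<^sub>m n m)"
  have "(adj H * H) $$ (j,j) = complex_of_real (\<Sum>k\<in>{0..<n}. (cmod (H $$ (k,j)))\<^sup>2)"
    using H i j unfolding of_real_sum
    by (auto simp: scalar_prod_def complex_norm_square[unfolded of_real_power] mult.commute intro!: sum.cong)
  moreover have "(adj H * H) $$ (j,j) = 0" using z i j by simp
  ultimately have "(\<Sum>k\<in>{0..<n}. (cmod (H $$ (k,j)))\<^sup>2) = 0"
    by (metis of_real_eq_0_iff)
  then have "\<forall>k\<in>{0..<n}. (cmod (H $$ (k,j)))\<^sup>2 = 0"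
    by (subst sum_nonneg_eq_0_iff[symmetric]) auto
  then show "H $$ (i,j) = 0\<^sub>m n m $$ (i,j)" using i j by simp
qed (use H in auto)

text \<open>If \<open>H\<^sup>k\<^sup>+\<^sup>1 = 0\<close> with \<open>k \<ge> 1\<close>, then \<open>(H\<^sup>k)\<^sup>* H\<^sup>k = H\<^sup>2\<^sup>k = 0\<close>, so \<open>H\<^sup>k = 0\<close>.\<close>

lemma hermitian_nilpotent_eq_zero: assumes H: "H \<in> carrier_mat n n" and h: "adj H = H"
  shows "H ^\<^sub>m Suc k = 0\<^sub>m n n \<Longrightarrow> H = 0\<^sub>m n n"
proof (induction k rule: less_induct)
  case (less k)
  show ?case
  proof (cases k)
    case 0
    then show ?thesis using less.prems H by simp
  next
    case (Suc k')
    let ?G = "H ^\<^sub>m k"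
    have "adj ?G * ?G = H ^\<^sub>m (Suc k + k')"
      using adj_pow[OF H, of k] h pow_mat_add[OF H, of k k] Suc by simp
    also have "\<dots> = 0\<^sub>m n n"
      using pow_mat_add[OF H, of "Suc k" k'] less.prems H by simp
    finally have "?G = 0\<^sub>m n n" using adj_mult_self_eq_zero[of ?G n n] H by simp
    then show ?thesis using less.IH[of k'] Suc by simp
  qed
qed

lemma mtrace_mult_comm: assumes "A \<in> carrier_mat n m" "B \<in> carrier_mat m n"
  shows "mtrace (A * B) = mtrace (B * A)"
proof -
  have "mtrace (A * B) = (\<Sum>i<n. \<Sum>j<m. A $$ (i,j) * B $$ (j,i))"
    using assms unfolding mtrace_def
    by (auto simp: scalar_prod_def atLeast0LessThan intro!: sum.cong)
  also have "\<dots> = (\<Sum>j<m. \<Sum>i<n. A $$ (i,j) * B $$ (j,i))" by (rule sum.swap)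
  also have "\<dots> = mtrace (B * A)"
    using assms unfolding mtrace_def
    by (auto simp: scalar_prod_def atLeast0LessThan mult.commute intro!: sum.cong)
  finally show ?thesis .
qed

lemma mtrace_mult_minus: "dim_row A = dim_row B \<Longrightarrow> dim_col A = dim_col B \<Longrightarrow>
    dim_col R = dim_row A \<Longrightarrow> dim_col A = dim_row R \<Longrightarrow>
    mtrace (R * (A - B)) = mtrace (R * A) - mtrace (R * (B :: complex mat))"
  unfolding mtrace_def by (simp add: scalar_prod_def algebra_simps flip: sum_subtractf)

lemma mtrace_mult_smult: "dim_col R = dim_row A \<Longrightarrow> dim_col A = dim_row R \<Longrightarrow>
    mtrace (R * (c \<cdot>\<^sub>m A)) = c * mtrace (R * (A :: complex mat))"
  unfolding mtrace_def by (simp add: scalar_prod_def algebra_simps sum_distrib_left)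

lemma hs_norm_eq_sqrt_mtrace: "hs_norm N = sqrt (Re (mtrace (adj N * N)))"
proof -
  have "mtrace (adj N * N) = (\<Sum>j<dim_col N. \<Sum>i<dim_row N. cnj (N $$ (i,j)) * N $$ (i,j))"
    by (auto simp: mtrace_def scalar_prod_def atLeast0LessThan intro!: sum.cong)
  also have "\<dots> = complex_of_real (\<Sum>j<dim_col N. \<Sum>i<dim_row N. (cmod (N $$ (i,j)))\<^sup>2)"
    unfolding of_real_sum by (simp add: complex_norm_square[unfolded of_real_power] mult.commute)
  finally have "Re (mtrace (adj N * N)) = (\<Sum>i<dim_row N. \<Sum>j<dim_col N. (cmod (N $$ (i,j)))\<^sup>2)"
    by (simp add: sum.swap[of _ "{..<dim_col N}"])
  then show ?thesis by (simp add: hs_norm_def)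
qed

section \<open>Polynomials of a square matrix\<close>

definition poly_mat :: "complex mat \<Rightarrow> complex poly \<Rightarrow> complex mat" where
  "poly_mat A p = foldr (\<lambda>c M. c \<cdot>\<^sub>m 1\<^sub>m (dim_row A) + A * M) (coeffs p) (0\<^sub>m (dim_row A) (dim_row A))"

lemma poly_mat_dim [simp]: "dim_row (poly_mat A p) = dim_row A" "dim_col (poly_mat A p) = dim_row A"
proof -
  have "dim_row (foldr (\<lambda>c M. c \<cdot>\<^sub>m 1\<^sub>m (dim_row A) + A * M) cs (0\<^sub>m (dim_row A) (dim_row A))) = dim_row A
    \<and> dim_col (foldr (\<lambda>c M. c \<cdot>\<^sub>m 1\<^sub>m (dim_row A) + A * M) cs (0\<^sub>m (dim_row A) (dim_row A))) = dim_row A"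
    for cs by (induction cs) auto
  then show "dim_row (poly_mat A p) = dim_row A" "dim_col (poly_mat A p) = dim_row A"
    by (auto simp: poly_mat_def)
qed

lemma poly_mat_0 [simp]: "poly_mat A 0 = 0\<^sub>m (dim_row A) (dim_row A)"
  by (simp add: poly_mat_def)

lemma poly_mat_pCons: assumes A: "A \<in> carrier_mat n n"
  shows "poly_mat A (pCons a p) = a \<cdot>\<^sub>m 1\<^sub>m n + A * poly_mat A p"
proof (cases "a = 0 \<and> p = 0")
  case True
  then show ?thesis using A by (auto simp: poly_mat_def)
next
  case False
  then have "coeffs (pCons a p) = a # coeffs p" by (auto simp: cCons_def)
  then show ?thesis using A by (simp add: poly_mat_def)
qed

lemma poly_mat_pCons_0: assumes A: "A \<in> carrier_mat n n"
  shows "poly_mat A (pCons 0 p) = A * poly_mat A p"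
  using A by (simp add: poly_mat_pCons[OF A]) (intro eq_matI, auto)

lemma poly_mat_carrier [simp]: "A \<in> carrier_mat n n \<Longrightarrow> poly_mat A p \<in> carrier_mat n n"
  by (metis carrier_matD(1) carrier_matI poly_mat_dim)

lemma poly_mat_add: assumes A: "A \<in> carrier_mat n n"
  shows "poly_mat A (p + q) = poly_mat A p + poly_mat A q"
proof (induction p q rule: poly_induct2)
  case 0
  then show ?case using A by simp
next
  case (pCons a p b q)
  have "poly_mat A (pCons a p + pCons b q) = (a + b) \<cdot>\<^sub>m 1\<^sub>m n + A * (poly_mat A p + poly_mat A q)"
    using pCons by (simp add: poly_mat_pCons[OF A])
  also have "\<dots> = (a \<cdot>\<^sub>m 1\<^sub>m n + A * poly_mat A p) + (b \<cdot>\<^sub>m 1\<^sub>m n + A * poly_mat A q)"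
    using A poly_mat_carrier[OF A, of p] poly_mat_carrier[OF A, of q]
    by (intro eq_matI) (auto simp: scalar_prod_def algebra_simps sum.distrib)
  finally show ?case by (simp add: poly_mat_pCons[OF A])
qed

lemma poly_mat_smult: assumes A: "A \<in> carrier_mat n n"
  shows "poly_mat A (smult c p) = c \<cdot>\<^sub>m poly_mat A p"
proof (induction p)
  case 0
  then show ?case using A by simp
next
  case (pCons a p)
  have "poly_mat A (smult c (pCons a p)) = (c * a) \<cdot>\<^sub>m 1\<^sub>m n + A * (c \<cdot>\<^sub>m poly_mat A p)"
    using pCons by (simp add: poly_mat_pCons[OF A])
  also have "\<dots> = c \<cdot>\<^sub>m (a \<cdot>\<^sub>m 1\<^sub>m n + A * poly_mat A p)"
    using A by (intro eq_matI) (auto simp: scalar_prod_def algebra_simps sum_distrib_left)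
  finally show ?case by (simp add: poly_mat_pCons[OF A])
qed

lemma poly_mat_mult: assumes A: "A \<in> carrier_mat n n"
  shows "poly_mat A (p * q) = poly_mat A p * poly_mat A q"
proof (induction p)
  case 0
  then show ?case using A by simp
next
  case (pCons a p)
  have "poly_mat A (pCons a p * q) = poly_mat A (smult a q) + poly_mat A (pCons 0 (p * q))"
    by (simp add: poly_mat_add[OF A])
  also have "\<dots> = a \<cdot>\<^sub>m poly_mat A q + A * (poly_mat A p * poly_mat A q)"
    using pCons by (simp add: poly_mat_smult[OF A] poly_mat_pCons_0[OF A])
  also have "\<dots> = (a \<cdot>\<^sub>m 1\<^sub>m n + A * poly_mat A p) * poly_mat A q"
    using A by (simp add: mat_arith_dim)
  finally show ?case by (simp add: poly_mat_pCons[OF A])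
qed

lemma poly_mat_X: assumes A: "A \<in> carrier_mat n n" shows "poly_mat A [:0, 1:] = A"
proof -
  have "poly_mat A [:1:] = 1\<^sub>m n"
    using A poly_mat_pCons[OF A, of 1 0] by simp
  then show ?thesis using A by (simp add: poly_mat_pCons_0[OF A])
qed

lemma poly_mat_commute: assumes A: "A \<in> carrier_mat n n"
  shows "A * poly_mat A p = poly_mat A p * A"
proof (induction p)
  case 0
  then show ?case using A by simp
next
  case (pCons a p)
  have "A * poly_mat A (pCons a p) = a \<cdot>\<^sub>m A + A * (A * poly_mat A p)"
    using A by (simp add: poly_mat_pCons[OF A] mat_arith_dim)
  also have "\<dots> = a \<cdot>\<^sub>m A + A * (poly_mat A p * A)" using pCons by simp
  also have "\<dots> = poly_mat A (pCons a p) * A"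
    using A by (simp add: poly_mat_pCons[OF A] mat_arith_dim)
  finally show ?case .
qed

lemma poly_mat_similar:
  assumes T: "T \<in> carrier_mat n n" and P: "P \<in> carrier_mat n n" and Q: "Q \<in> carrier_mat n n"
    and PQ: "P * Q = 1\<^sub>m n" and QP: "Q * P = 1\<^sub>m n"
  shows "poly_mat (P * T * Q) p = P * poly_mat T p * Q"
proof (induction p)
  case 0
  then show ?case using P Q T by (simp add: mat_arith_dim)
next
  case (pCons a p)
  note dims = carrier_matD[OF P] carrier_matD[OF Q] carrier_matD[OF T]
  have QPX: "Q * (P * X) = X" if "dim_row X = n" for X
    using that dims by (simp add: assoc_mult_mat_dim[symmetric] QP)
  have "poly_mat (P * T * Q) (pCons a p) = a \<cdot>\<^sub>m 1\<^sub>m n + (P * T * Q) * (P * poly_mat T p * Q)"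
    using pCons P T Q by (simp add: poly_mat_pCons[of _ n])
  also have "\<dots> = P * (a \<cdot>\<^sub>m 1\<^sub>m n + T * poly_mat T p) * Q"
    using dims by (simp add: mat_arith_dim QPX PQ)
  finally show ?case by (simp add: poly_mat_pCons[OF T])
qed

definition real_coeffs :: "complex poly \<Rightarrow> bool" where
  "real_coeffs p \<longleftrightarrow> (\<forall>k. cnj (coeff p k) = coeff p k)"

lemma real_coeffs_add: "real_coeffs p \<Longrightarrow> real_coeffs q \<Longrightarrow> real_coeffs (p + q)"
  by (simp add: real_coeffs_def)

lemma real_coeffs_diff: "real_coeffs p \<Longrightarrow> real_coeffs q \<Longrightarrow> real_coeffs (p - q)"
  by (simp add: real_coeffs_def)

lemma real_coeffs_mult: "real_coeffs p \<Longrightarrow> real_coeffs q \<Longrightarrow> real_coeffs (p * q)"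
  by (simp add: real_coeffs_def coeff_mult)

lemma real_coeffs_smult: "cnj c = c \<Longrightarrow> real_coeffs p \<Longrightarrow> real_coeffs (smult c p)"
  by (simp add: real_coeffs_def)

lemma real_coeffs_pCons: "cnj c = c \<Longrightarrow> real_coeffs p \<Longrightarrow> real_coeffs (pCons c p)"
  by (simp add: real_coeffs_def coeff_pCons split: nat.split)

lemma real_coeffs_0: "real_coeffs 0"
  by (simp add: real_coeffs_def)

lemma real_coeffs_prod: "(\<And>x. x \<in> S \<Longrightarrow> real_coeffs (g x)) \<Longrightarrow> real_coeffs (\<Prod>x\<in>S. g x)"
proof (induction S rule: infinite_finite_induct)
  case (insert x F)
  then show ?case by (simp add: real_coeffs_mult)
qed (simp_all add: real_coeffs_def coeff_1)

lemma cnj_poly_real_coeffs: assumes "real_coeffs p" "cnj x = x" shows "cnj (poly p x) = poly p x"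
proof -
  have "map_poly cnj p = p" using assms(1) by (intro poly_eqI) (auto simp: coeff_map_poly real_coeffs_def)
  then show ?thesis using poly_cnj[of p x] assms(2) by simp
qed

lemma real_poly_interpolation: assumes "finite S" "\<forall>x\<in>S. cnj x = x \<and> cnj (f x) = f x"
  shows "\<exists>q. real_coeffs q \<and> (\<forall>x\<in>S. poly q x = f x)"
  using assms
proof (induction S rule: finite_induct)
  case empty
  then show ?case using real_coeffs_0 by blast
next
  case (insert a S)
  then obtain q where q: "real_coeffs q" "\<forall>x\<in>S. poly q x = f x" by auto
  define N where "N = (\<Prod>s\<in>S. [:- s, 1:])"
  have rN: "real_coeffs N" unfolding N_def using insert.prems
    by (intro real_coeffs_prod real_coeffs_pCons real_coeffs_0) auto
  have N0: "poly N x = 0" if "x \<in> S" for x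
    unfolding N_def poly_prod using insert.hyps(1) that by (auto intro: prod_zero)
  have Na: "poly N a \<noteq> 0"
    unfolding N_def poly_prod using insert.hyps by auto
  define c where "c = (f a - poly q a) / poly N a"
  have "cnj c = c"
    unfolding c_def using cnj_poly_real_coeffs[OF q(1)] cnj_poly_real_coeffs[OF rN] insert.prems
    by simp
  then have "real_coeffs (q + smult c N)" by (intro real_coeffs_add q real_coeffs_smult rN)
  moreover have "\<forall>x\<in>insert a S. poly (q + smult c N) x = f x"
    using q(2) N0 Na by (auto simp: c_def)
  ultimately show ?case by blast
qed

lemma adj_poly_mat: assumes A: "A \<in> carrier_mat n n" and h: "adj A = A"
  shows "real_coeffs p \<Longrightarrow> adj (poly_mat A p) = poly_mat A p"
proof (induction p)
  case 0
  then show ?case using A by simp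
next
  case (pCons a p)
  have a: "cnj a = a" using pCons(3) by (auto simp: real_coeffs_def dest: spec[of _ 0])
  have p: "real_coeffs p" using pCons(3) unfolding real_coeffs_def by (metis coeff_pCons_Suc)
  have M: "poly_mat A p \<in> carrier_mat n n" using A by simp
  have "adj (a \<cdot>\<^sub>m 1\<^sub>m n + A * poly_mat A p) = adj (a \<cdot>\<^sub>m 1\<^sub>m n) + adj (A * poly_mat A p)"
    by (rule adj_add) (use A M in auto)
  also have "\<dots> = a \<cdot>\<^sub>m 1\<^sub>m n + poly_mat A p * A"
    using a pCons(2)[OF p] h by (simp add: adj_mult[OF A M] adj_smult)
  also have "\<dots> = a \<cdot>\<^sub>m 1\<^sub>m n + A * poly_mat A p" using poly_mat_commute[OF A] by simp
  finally show ?case by (simp add: poly_mat_pCons[OF A])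
qed

lemma upper_triangular_mult:
  assumes A: "A \<in> carrier_mat n n" and B: "B \<in> carrier_mat n n"
    and uA: "upper_triangular A" and uB: "upper_triangular B"
  shows "upper_triangular (A * B)" "\<And>j. j < n \<Longrightarrow> (A * B) $$ (j,j) = A $$ (j,j) * B $$ (j,j)"
proof -
  have a: "A $$ (i,k) = 0" if "k < i" "i < n" for i k using uA A that by auto
  have b: "B $$ (i,k) = 0" if "k < i" "i < n" for i k using uB B that by auto
  show "upper_triangular (A * B)"
  proof (rule upper_triangularI)
    fix i j assume ji: "j < i" and i: "i < dim_row (A * B)"
    have "(A * B) $$ (i,j) = (\<Sum>k\<in>{0..<n}. A $$ (i,k) * B $$ (k,j))"
      using A B ji i by (simp add: scalar_prod_def)
    also have "\<dots> = 0"
    proof (intro sum.neutral ballI)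
      fix k assume "k \<in> {0..<n}"
      then show "A $$ (i,k) * B $$ (k,j) = 0"
        using a[of k i] b[of j k] i ji A by (cases "k < i") auto
    qed
    finally show "(A * B) $$ (i,j) = 0" .
  qed
  fix j assume j: "j < n"
  have "(A * B) $$ (j,j) = (\<Sum>k\<in>{0..<n}. A $$ (j,k) * B $$ (k,j))"
    using A B j by (simp add: scalar_prod_def)
  also have "\<dots> = (\<Sum>k\<in>{j}. A $$ (j,k) * B $$ (k,j))"
  proof (rule sum.mono_neutral_right)
    show "\<forall>k\<in>{0..<n} - {j}. A $$ (j,k) * B $$ (k,j) = 0"
    proof
      fix k assume "k \<in> {0..<n} - {j}"
      then show "A $$ (j,k) * B $$ (k,j) = 0" using a[of k j] b[of j k] j by (cases "k < j") auto
    qed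
  qed (use j in auto)
  finally show "(A * B) $$ (j,j) = A $$ (j,j) * B $$ (j,j)" by simp
qed

lemma poly_mat_upper_triangular: assumes T: "T \<in> carrier_mat n n" and uT: "upper_triangular T"
  shows "upper_triangular (poly_mat T p) \<and> (\<forall>j<n. poly_mat T p $$ (j,j) = poly p (T $$ (j,j)))"
proof (induction p)
  case 0
  then show ?case using T by (auto simp: upper_triangular_def)
next
  case (pCons a p)
  have M: "poly_mat T p \<in> carrier_mat n n" using T by simp
  note TM = upper_triangular_mult[OF T M uT conjunct1[OF pCons(2)]]
  have "upper_triangular (a \<cdot>\<^sub>m 1\<^sub>m n + T * poly_mat T p)"
    using TM(1) T M by (auto simp: upper_triangular_def)
  moreover have "(a \<cdot>\<^sub>m 1\<^sub>m n + T * poly_mat T p) $$ (j,j) = poly (pCons a p) (T $$ (j,j))"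
    if j: "j < n" for j
    using TM(2)[OF j] j pCons(2) T M by simp
  ultimately show ?case by (simp add: poly_mat_pCons[OF T])
qed

lemma strictly_upper_triangular_pow:
  assumes U: "U \<in> carrier_mat n n" and sU: "\<And>i j. i < n \<Longrightarrow> j \<le> i \<Longrightarrow> U $$ (i,j) = 0"
  shows "i < n \<Longrightarrow> j < n \<Longrightarrow> j < i + k \<Longrightarrow> (U ^\<^sub>m k) $$ (i,j) = 0"
proof (induction k arbitrary: i j)
  case 0
  then show ?case using U by simp
next
  case (Suc k)
  have "(U ^\<^sub>m Suc k) $$ (i,j) = (\<Sum>l\<in>{0..<n}. (U ^\<^sub>m k) $$ (i,l) * U $$ (l,j))"
    using U Suc.prems by (simp add: scalar_prod_def)
  also have "\<dots> = 0"
  proof (intro sum.neutral ballI)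
    fix l assume "l \<in> {0..<n}"
    then show "(U ^\<^sub>m k) $$ (i,l) * U $$ (l,j) = 0"
      using Suc.IH[of i l] sU[of l j] Suc.prems by (cases "l < i + k") auto
  qed
  finally show ?case .
qed

lemma strictly_upper_triangular_nilpotent:
  assumes U: "U \<in> carrier_mat n n" and sU: "\<And>i j. i < n \<Longrightarrow> j \<le> i \<Longrightarrow> U $$ (i,j) = 0"
  shows "U ^\<^sub>m n = 0\<^sub>m n n"
  using strictly_upper_triangular_pow[OF U sU, of _ _ n] U by (intro eq_matI) auto

lemma poly_prod_list_linear_eq_0_iff:
  "poly (\<Prod>e\<leftarrow>es. [:- e, 1:]) x = 0 \<longleftrightarrow> x \<in> set (es :: complex list)"
  by (induction es) auto

text \<open>By the Schur decomposition \<open>A = P T P\<^sup>-\<^sup>1\<close>, the matrix \<open>p(T)\<close> is strictly upper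
  triangular.\<close>

lemma poly_mat_nilpotent:
  assumes A: "A \<in> carrier_mat n n" and roots: "\<And>l. eigenvalue A l \<Longrightarrow> poly p l = 0"
  shows "poly_mat A p ^\<^sub>m n = 0\<^sub>m n n"
proof -
  obtain es where cp: "char_poly A = (\<Prod>e\<leftarrow>es. [:- e, 1:])"
    using char_poly_factorized[OF A] by auto
  obtain T P Q where sd: "schur_decomposition A es = (T, P, Q)"
    by (cases "schur_decomposition A es") auto
  from schur_decomposition[OF A cp sd]
  have sim: "similar_mat_wit A T P Q" and uT: "upper_triangular T" and dT: "diag_mat T = es"
    by auto
  from sim A have T: "T \<in> carrier_mat n n" and P: "P \<in> carrier_mat n n" and Q: "Q \<in> carrier_mat n n"
    and PQ: "P * Q = 1\<^sub>m n" and QP: "Q * P = 1\<^sub>m n" and AT: "A = P * T * Q"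
    unfolding similar_mat_wit_def Let_def by auto
  have ev: "eigenvalue A (T $$ (j,j))" if "j < n" for j
  proof -
    have "T $$ (j,j) \<in> set es" using dT that T unfolding diag_mat_def by auto
    then show ?thesis
      unfolding eigenvalue_root_char_poly[OF A] cp poly_prod_list_linear_eq_0_iff .
  qed
  let ?U = "poly_mat T p"
  have U: "?U \<in> carrier_mat n n" using T by simp
  have uU: "upper_triangular ?U" and dU: "\<And>j. j < n \<Longrightarrow> ?U $$ (j,j) = poly p (T $$ (j,j))"
    using poly_mat_upper_triangular[OF T uT, of p] by auto
  have "?U $$ (i,j) = 0" if "i < n" "j \<le> i" for i j
  proof (cases "j = i")
    case True
    then show ?thesis using dU[of i] roots[OF ev[of i]] that by simp
  next
    case False
    then show ?thesis using uU that U by (auto simp: upper_triangular_def)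
  qed
  then have Un: "?U ^\<^sub>m n = 0\<^sub>m n n" by (rule strictly_upper_triangular_nilpotent[OF U])
  have "similar_mat_wit (poly_mat A p) ?U P Q"
    unfolding similar_mat_wit_def Let_def AT poly_mat_similar[OF T P Q PQ QP]
    using P Q U PQ QP by simp
  then have "poly_mat A p ^\<^sub>m n = P * ?U ^\<^sub>m n * Q" by (rule similar_mat_wit_pow_id)
  then show ?thesis using Un P Q by simp
qed

lemma hermitian_poly_mat_eq_0:
  assumes A: "A \<in> carrier_mat n n" and h: "adj A = A" and p: "real_coeffs p"
    and roots: "\<And>l. eigenvalue A l \<Longrightarrow> poly p l = 0"
  shows "poly_mat A p = 0\<^sub>m n n"
proof (cases n)
  case 0
  then show ?thesis using A by (intro eq_matI) auto
next
  case (Suc k)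
  then show ?thesis
    using hermitian_nilpotent_eq_zero[OF poly_mat_carrier[OF A] adj_poly_mat[OF A h p], of k]
      poly_mat_nilpotent[OF A roots]
    by simp
qed

lemma hermitian_poly_mat_eq:
  assumes A: "A \<in> carrier_mat n n" and h: "adj A = A" and p: "real_coeffs p" and q: "real_coeffs q"
    and eq: "\<And>l. eigenvalue A l \<Longrightarrow> poly p l = poly q l"
  shows "poly_mat A p = poly_mat A q"
proof -
  have "poly_mat A (p - q) = 0\<^sub>m n n"
    using hermitian_poly_mat_eq_0[OF A h real_coeffs_diff[OF p q]] eq by simp
  then show ?thesis using poly_mat_add[OF A, of "p - q" q] A by simp
qed

section \<open>Positive semidefinite matrices and their square roots\<close>

definition cinner :: "complex vec \<Rightarrow> complex vec \<Rightarrow> complex" where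
  "cinner v w = (\<Sum>i<dim_vec v. cnj (v $ i) * w $ i)"

lemma cinner_mult_mat_vec: assumes H: "H \<in> carrier_mat n n" and v: "v \<in> carrier_vec n" and w: "w \<in> carrier_vec n"
  shows "cinner v (H *\<^sub>v w) = cinner (adj H *\<^sub>v v) w"
proof -
  have "cinner v (H *\<^sub>v w) = (\<Sum>i<n. \<Sum>j<n. cnj (v $ i) * H $$ (i,j) * w $ j)"
    using H v w by (auto simp: cinner_def scalar_prod_def sum_distrib_left atLeast0LessThan mult.assoc
        intro!: sum.cong)
  also have "\<dots> = (\<Sum>j<n. \<Sum>i<n. cnj (v $ i) * H $$ (i,j) * w $ j)" by (rule sum.swap)
  also have "\<dots> = cinner (adj H *\<^sub>v v) w"
    using H v w by (auto simp: cinner_def scalar_prod_def sum_distrib_right sum_distrib_left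
        atLeast0LessThan mult.commute mult.left_commute intro!: sum.cong)
  finally show ?thesis .
qed

lemma cinner_smult_right: "dim_vec w = dim_vec v \<Longrightarrow> cinner v (c \<cdot>\<^sub>v w) = c * cinner v w"
  by (auto simp: cinner_def sum_distrib_left mult.left_commute intro!: sum.cong)

lemma cinner_smult_left: "cinner (c \<cdot>\<^sub>v v) w = cnj c * cinner v w"
  by (auto simp: cinner_def sum_distrib_left mult.assoc intro!: sum.cong)

lemma cinner_add_left: "dim_vec u = dim_vec v \<Longrightarrow> cinner (u + v) w = cinner u w + cinner v w"
  by (auto simp: cinner_def algebra_simps sum.distrib)

lemma cinner_add_right: "dim_vec u = dim_vec v \<Longrightarrow> dim_vec u = dim_vec w \<Longrightarrow>
    cinner v (u + w) = cinner v u + cinner v w"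
  by (auto simp: cinner_def algebra_simps sum.distrib)

lemma cinner_commute: "dim_vec v = dim_vec w \<Longrightarrow> cinner w v = cnj (cinner v w)"
  by (auto simp: cinner_def mult.commute)

lemma cinner_self: "cinner v v = complex_of_real (\<Sum>i<dim_vec v. (cmod (v $ i))\<^sup>2)"
  unfolding cinner_def of_real_sum
  by (simp add: complex_norm_square[unfolded of_real_power] mult.commute)

lemma cinner_self_nonneg: "cinner v v \<in> \<real>" "Re (cinner v v) \<ge> 0"
  using cinner_self[of v] by (auto intro: sum_nonneg)

lemma cinner_self_eq_0_iff: "cinner v v = 0 \<longleftrightarrow> v = 0\<^sub>v (dim_vec v)"
proof
  assume "cinner v v = 0"
  then have "(\<Sum>i<dim_vec v. (cmod (v $ i))\<^sup>2) = 0" by (metis cinner_self of_real_eq_0_iff)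
  then have "\<forall>i\<in>{..<dim_vec v}. (cmod (v $ i))\<^sup>2 = 0"
    by (subst sum_nonneg_eq_0_iff[symmetric]) auto
  then show "v = 0\<^sub>v (dim_vec v)" by (intro eq_vecI) auto
next
  assume "v = 0\<^sub>v (dim_vec v)"
  then have "v $ i = 0" if "i < dim_vec v" for i using that by (metis index_zero_vec(1))
  then show "cinner v v = 0" by (simp add: cinner_def)
qed

lemma psd_iff_cinner: assumes A: "A \<in> carrier_mat n n"
  shows "psd A \<longleftrightarrow>
    adj A = A \<and> (\<forall>v\<in>carrier_vec n. cinner v (A *\<^sub>v v) \<in> \<real> \<and> Re (cinner v (A *\<^sub>v v)) \<ge> 0)"
proof -
  have qform: "qform A (\<lambda>i. v $ i) = cinner v (A *\<^sub>v v)" if "v \<in> carrier_vec n" for v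
    using A that by (auto simp: qform_def cinner_def scalar_prod_def sum_distrib_left mult.assoc
        atLeast0LessThan intro!: sum.cong)
  have "qform A f = qform A (\<lambda>i. vec n f $ i)" for f
    using A by (auto simp: qform_def intro!: sum.cong)
  then show ?thesis
    using A qform vec_carrier unfolding psd_def hermitian_def by (metis carrier_matD)
qed

lemma psd_adj_mult_self: assumes H: "H \<in> carrier_mat n n" shows "psd (adj H * H)"
  unfolding psd_iff_cinner[OF mult_carrier_mat[OF adj_carrier[OF H] H]]
proof (intro conjI ballI)
  show "adj (adj H * H) = adj H * H"
    using adj_mult[OF adj_carrier[OF H] H] by simp
  fix v :: "complex vec" assume v: "v \<in> carrier_vec n"
  have "cinner v ((adj H * H) *\<^sub>v v) = cinner (H *\<^sub>v v) (H *\<^sub>v v)"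
    using cinner_mult_mat_vec[OF adj_carrier[OF H] v, of "H *\<^sub>v v"] H v
    by (simp add: assoc_mult_mat_vec[OF adj_carrier[OF H] H v])
  then show "cinner v ((adj H * H) *\<^sub>v v) \<in> \<real>" "Re (cinner v ((adj H * H) *\<^sub>v v)) \<ge> 0"
    using cinner_self_nonneg by auto
qed

lemma hermitian_eigenvalue_real:
  assumes H: "H \<in> carrier_mat n n" and h: "adj H = H" and ev: "eigenvector H v l"
  shows "cnj l = l"
proof -
  have v: "v \<in> carrier_vec n" and v0: "v \<noteq> 0\<^sub>v n" and Hv: "H *\<^sub>v v = l \<cdot>\<^sub>v v"
    using ev H unfolding eigenvector_def by auto
  have "l * cinner v v = cinner v (H *\<^sub>v v)" using Hv v by (simp add: cinner_smult_right)
  also have "\<dots> = cnj l * cinner v v"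
    using cinner_mult_mat_vec[OF H v v] h Hv by (simp add: cinner_smult_left)
  finally have "(l - cnj l) * cinner v v = 0" by (simp add: algebra_simps)
  then show ?thesis using cinner_self_eq_0_iff[of v] v v0 by auto
qed

lemma psd_eigenvalue_nonneg:
  assumes A: "A \<in> carrier_mat n n" and p: "psd A" and e: "eigenvalue A l"
  shows "l = complex_of_real (Re l) \<and> Re l \<ge> 0"
proof -
  obtain v where "eigenvector A v l" using e unfolding eigenvalue_def by auto
  then have v: "v \<in> carrier_vec n" and v0: "v \<noteq> 0\<^sub>v n" and Av: "A *\<^sub>v v = l \<cdot>\<^sub>v v"
    using A unfolding eigenvector_def by auto
  define s where "s = (\<Sum>i<dim_vec v. (cmod (v $ i))\<^sup>2)"
  have s: "cinner v v = complex_of_real s" unfolding s_def by (rule cinner_self)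
  moreover have "s \<ge> 0" unfolding s_def by (intro sum_nonneg) auto
  moreover have "cinner v v \<noteq> 0" using cinner_self_eq_0_iff[of v] v v0 by auto
  ultimately have s: "cinner v v = complex_of_real s" "s > 0" by auto
  have "cinner v (A *\<^sub>v v) = l * cinner v v" using Av v by (simp add: cinner_smult_right)
  then obtain t where t: "l * complex_of_real s = complex_of_real t" "t \<ge> 0"
    using psd_iff_cinner[OF A] p v s by (metis Reals_cases Re_complex_of_real)
  then have "l = complex_of_real (t / s)" using s by (simp add: field_simps)
  then show ?thesis using t s by simp
qed

text \<open>Interpolating the fourth root on the spectrum by a real polynomial \<open>q\<close>, the matrix
  \<open>q(A)\<^sup>2\<close> is positive semidefinite and its square is \<open>q\<^sup>4(A) = A\<close>.\<close>

lemma psd_sqrt_exists: assumes A: "A \<in> carrier_mat n n" and p: "psd A"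
  shows "\<exists>B. B \<in> carrier_mat n n \<and> psd B \<and> B * B = A"
proof -
  have hA: "adj A = A" using p by (simp add: psd_def hermitian_def)
  let ?S = "{l. eigenvalue A l}"
  have "char_poly A \<noteq> 0" using degree_monic_char_poly[OF A] by auto
  then have fin: "finite ?S" using eigenvalue_root_char_poly[OF A] poly_roots_finite by simp
  define f where "f l = complex_of_real (root 4 (Re l))" for l
  have "cnj x = x \<and> cnj (f x) = f x" if "x \<in> ?S" for x
  proof -
    have "x = complex_of_real (Re x)" using psd_eigenvalue_nonneg[OF A p] that by auto
    then show ?thesis unfolding f_def by (metis complex_cnj_complex_of_real)
  qed
  then obtain q where q: "real_coeffs q" "\<forall>x\<in>?S. poly q x = f x"
    using real_poly_interpolation[OF fin] by blast
  define H where "H = poly_mat A q"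
  have H: "H \<in> carrier_mat n n" unfolding H_def using A by (rule poly_mat_carrier)
  have hH: "adj H = H" unfolding H_def by (rule adj_poly_mat[OF A hA q(1)])
  have "psd (H * H)" using psd_adj_mult_self[OF H] unfolding hH .
  moreover have "(H * H) * (H * H) = A"
  proof -
    have "poly ((q * q) * (q * q)) l = poly [:0, 1:] l" if l: "eigenvalue A l" for l
    proof -
      have l_real: "l = complex_of_real (Re l)" "Re l \<ge> 0" using psd_eigenvalue_nonneg[OF A p l] by auto
      have "f l * f l * (f l * f l) = l"
        unfolding f_def using l_real
        by (metis of_real_mult power4_eq_xxxx real_root_pow_pos2 zero_less_numeral mult.assoc)
      moreover have "poly q l = f l" using q(2) l by simp
      ultimately show ?thesis by simp
    qed
    moreover have "real_coeffs ((q * q) * (q * q))" "real_coeffs [:0, 1:]"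
      by (intro real_coeffs_mult real_coeffs_pCons real_coeffs_0 q(1); simp)+
    ultimately have "poly_mat A ((q * q) * (q * q)) = A"
      using hermitian_poly_mat_eq[OF A hA] poly_mat_X[OF A] by metis
    then show ?thesis unfolding H_def by (simp add: poly_mat_mult[OF A])
  qed
  moreover have "H * H \<in> carrier_mat n n" using H by simp
  ultimately show ?thesis by blast
qed

text \<open>Expand \<open>\<parallel>X v + m v\<parallel>\<^sup>2 = \<parallel>Y v\<parallel>\<^sup>2 = \<langle>v, Y\<^sup>2 v\<rangle> = \<langle>v, X\<^sup>2 v\<rangle> = \<parallel>X v\<parallel>\<^sup>2\<close>.\<close>

lemma psd_square_eq_eigen_shift:
  assumes X: "X \<in> carrier_mat n n" and Y: "Y \<in> carrier_mat n n"
    and pX: "psd X" and pY: "psd Y" and v: "v \<in> carrier_vec n"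
    and Yv: "Y *\<^sub>v v = X *\<^sub>v v + m \<cdot>\<^sub>v v" and m: "cnj m = m" and sq: "Y * Y = X * X"
  shows "m * (2 * cinner v (X *\<^sub>v v) + m * cinner v v) = 0"
proof -
  have hX: "adj X = X" and hY: "adj Y = Y" using pX pY by (auto simp: psd_def hermitian_def)
  have real: "cnj (cinner v (X *\<^sub>v v)) = cinner v (X *\<^sub>v v)"
    using psd_iff_cinner[OF X] pX v by (auto simp: Reals_cnj_iff)
  have "cinner (Y *\<^sub>v v) (Y *\<^sub>v v) = cinner v ((Y * Y) *\<^sub>v v)"
    using cinner_mult_mat_vec[OF Y v, of "Y *\<^sub>v v"] hY Y v by simp
  also have "\<dots> = cinner (X *\<^sub>v v) (X *\<^sub>v v)"
    using cinner_mult_mat_vec[OF X v, of "X *\<^sub>v v"] hX sq X v by simp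
  finally have eq: "cinner (X *\<^sub>v v + m \<cdot>\<^sub>v v) (X *\<^sub>v v + m \<cdot>\<^sub>v v) = cinner (X *\<^sub>v v) (X *\<^sub>v v)"
    using Yv by simp
  have "cinner (X *\<^sub>v v + m \<cdot>\<^sub>v v) (X *\<^sub>v v + m \<cdot>\<^sub>v v) = cinner (X *\<^sub>v v) (X *\<^sub>v v)
      + m * cinner (X *\<^sub>v v) v + cnj m * cinner v (X *\<^sub>v v) + cnj m * m * cinner v v"
    using X v by (simp add: cinner_add_left cinner_add_right cinner_smult_left cinner_smult_right
        algebra_simps)
  also have "cinner (X *\<^sub>v v) v = cinner v (X *\<^sub>v v)"
    using cinner_commute[of v "X *\<^sub>v v"] real X v by simp
  finally show ?thesis using eq m by (simp add: algebra_simps)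
qed

text \<open>Applied to \<open>(B, C)\<close> and to \<open>(C, B)\<close>, the previous lemma gives
  \<open>2 \<langle>v, B v\<rangle> = -l \<parallel>v\<parallel>\<^sup>2\<close> and \<open>2 \<langle>v, C v\<rangle> = l \<parallel>v\<parallel>\<^sup>2\<close> for \<open>l \<noteq> 0\<close>;
  both left-hand sides are nonnegative.\<close>

lemma psd_eigen_shift_eq_0:
  assumes B: "B \<in> carrier_mat n n" and C: "C \<in> carrier_mat n n"
    and pB: "psd B" and pC: "psd C" and sq: "B * B = C * C"
    and ev: "eigenvector (C - B) v l"
  shows "l = 0"
proof (rule ccontr)
  assume l0: "l \<noteq> 0"
  have D: "C - B \<in> carrier_mat n n" using B C by (simp add: minus_carrier_mat)
  have "adj (C - B) = C - B" using adj_minus[OF C B] pB pC by (simp add: psd_def hermitian_def)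
  then have l: "cnj l = l" using hermitian_eigenvalue_real[OF D _ ev] by simp
  have v: "v \<in> carrier_vec n" and v0: "v \<noteq> 0\<^sub>v n" and Dv: "(C - B) *\<^sub>v v = l \<cdot>\<^sub>v v"
    using ev D unfolding eigenvector_def by auto
  have diff: "C *\<^sub>v v - B *\<^sub>v v = l \<cdot>\<^sub>v v" using B C v Dv by (simp add: minus_mult_distrib_mat_vec)
  have entry: "(C *\<^sub>v v) $ i = (B *\<^sub>v v) $ i + l * v $ i" if "i < n" for i
  proof -
    have "(C *\<^sub>v v - B *\<^sub>v v) $ i = (l \<cdot>\<^sub>v v) $ i" using diff by simp
    then show ?thesis using that B v by (simp add: algebra_simps del: index_mult_mat_vec)
  qed
  have Cv: "C *\<^sub>v v = B *\<^sub>v v + l \<cdot>\<^sub>v v" and Bv: "B *\<^sub>v v = C *\<^sub>v v + (- l) \<cdot>\<^sub>v v"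
    by (rule eq_vecI, use entry B C v in \<open>simp_all del: index_mult_mat_vec\<close>)+
  define b c r where "b = cinner v (B *\<^sub>v v)" and "c = cinner v (C *\<^sub>v v)" and "r = cinner v v"
  have "2 * b + l * r = 0"
    using psd_square_eq_eigen_shift[OF B C pB pC v Cv l sq[symmetric]] l0 by (simp add: b_def r_def)
  moreover have "2 * c - l * r = 0"
    using psd_square_eq_eigen_shift[OF C B pC pB v Bv _ sq] l l0 by (simp add: c_def r_def)
  moreover have "2 * (b + c) = (2 * b + l * r) + (2 * c - l * r)" by (simp add: algebra_simps)
  ultimately have "b + c = 0" by (metis add.right_neutral mult_eq_0_iff zero_neq_numeral)
  then have "Re b + Re c = 0" by (metis plus_complex.sel(1) zero_complex.sel(1))
  moreover have "b \<in> \<real>" "Re b \<ge> 0" "Re c \<ge> 0"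
    using psd_iff_cinner[OF B] psd_iff_cinner[OF C] pB pC v unfolding b_def c_def by auto
  ultimately have "b = 0" by (auto simp: complex_eq_iff complex_is_Real_iff)
  then have "l * r = 0" using \<open>2 * b + l * r = 0\<close> by simp
  then show False using l0 cinner_self_eq_0_iff[of v] v v0 by (auto simp: r_def)
qed

lemma psd_sqrt_unique:
  assumes B: "B \<in> carrier_mat n n" and C: "C \<in> carrier_mat n n"
    and pB: "psd B" and pC: "psd C" and sq: "B * B = C * C"
  shows "B = C"
proof -
  have D: "C - B \<in> carrier_mat n n" using B C by (simp add: minus_carrier_mat)
  have "adj (C - B) = C - B" using adj_minus[OF C B] pB pC by (simp add: psd_def hermitian_def)
  moreover have "poly [:0, 1:] l = 0" if "eigenvalue (C - B) l" for l
    using psd_eigen_shift_eq_0[OF B C pB pC sq] that unfolding eigenvalue_def by auto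
  ultimately have "poly_mat (C - B) [:0, 1:] = 0\<^sub>m n n"
    by (intro hermitian_poly_mat_eq_0[OF D]) (auto simp: real_coeffs_def coeff_pCons split: nat.split)
  then have CB: "C - B = 0\<^sub>m n n" using poly_mat_X[OF D] by simp
  show ?thesis
  proof (rule eq_matI)
    fix i j assume "i < dim_row C" "j < dim_col C"
    moreover have "(C - B) $$ (i,j) = 0\<^sub>m n n $$ (i,j)" using CB by simp
    ultimately show "B $$ (i,j) = C $$ (i,j)" using B C by simp
  qed (use B C in auto)
qed

lemma mat_sqrt_spec: assumes A: "A \<in> carrier_mat n n" and p: "psd A"
  shows "mat_sqrt A \<in> carrier_mat n n \<and> psd (mat_sqrt A) \<and> mat_sqrt A * mat_sqrt A = A"
proof -
  define P where "P B \<longleftrightarrow> B \<in> carrier_mat n n \<and> psd B \<and> B * B = A" for B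
  have "\<exists>!B. P B" unfolding P_def using psd_sqrt_exists[OF A p] psd_sqrt_unique by metis
  then have "P (THE B. P B)" by (rule theI')
  then show ?thesis using A unfolding mat_sqrt_def P_def by simp
qed

section \<open>Weyl operators\<close>

lemma norm_pow_mat_entry_le:
  fixes A :: "complex mat" assumes A: "A \<in> carrier_mat n n"
    and c: "\<And>i j. i < n \<Longrightarrow> j < n \<Longrightarrow> cmod (A $$ (i,j)) \<le> c"
  shows "i < n \<Longrightarrow> j < n \<Longrightarrow> cmod ((A ^\<^sub>m k) $$ (i,j)) \<le> (real n * c) ^ k"
proof (induction k arbitrary: i j)
  case 0
  then show ?case using A by simp
next
  case (Suc k)
  have c0: "0 \<le> c" using c[of i j] Suc.prems norm_ge_zero order_trans by blast
  have "(A ^\<^sub>m Suc k) $$ (i,j) = (\<Sum>l\<in>{0..<n}. (A ^\<^sub>m k) $$ (i,l) * A $$ (l,j))"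
    using A Suc.prems by (simp add: scalar_prod_def)
  also have "cmod \<dots> \<le> (\<Sum>l\<in>{0..<n}. cmod ((A ^\<^sub>m k) $$ (i,l) * A $$ (l,j)))" by (rule norm_sum)
  also have "\<dots> \<le> (\<Sum>l\<in>{0..<n}. (real n * c) ^ k * c)"
    unfolding norm_mult using Suc.IH[of i] c[of _ j] Suc.prems c0
    by (intro sum_mono mult_mono) auto
  also have "\<dots> = (real n * c) ^ Suc k" by (simp add: algebra_simps)
  finally show ?case .
qed

lemma summable_mat_exp_entry:
  fixes A :: "complex mat" assumes A: "A \<in> carrier_mat n n" and i: "i < n" and j: "j < n"
  shows "summable (\<lambda>k. (A ^\<^sub>m k) $$ (i,j) / of_nat (fact k))"
proof -
  define c where "c = (\<Sum>i<n. \<Sum>j<n. cmod (A $$ (i,j)))"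
  have c: "cmod (A $$ (i',j')) \<le> c" if "i' < n" "j' < n" for i' j'
  proof -
    have "cmod (A $$ (i',j')) \<le> (\<Sum>j<n. cmod (A $$ (i',j)))"
      using that by (intro member_le_sum) auto
    also have "\<dots> \<le> c"
      unfolding c_def using that by (intro member_le_sum[of i' "{..<n}"]) (auto intro: sum_nonneg)
    finally show ?thesis .
  qed
  show ?thesis
  proof (rule summable_comparison_test')
    show "summable (\<lambda>k. inverse (fact k) * (real n * c) ^ k)" by (rule summable_exp)
    fix k :: nat
    show "cmod ((A ^\<^sub>m k) $$ (i,j) / of_nat (fact k)) \<le> inverse (fact k) * (real n * c) ^ k"
      using norm_pow_mat_entry_le[OF A c i j, of k]
      by (simp add: norm_divide divide_right_mono field_simps)
  qed
qed

lemma adj_mat_exp: assumes A: "A \<in> carrier_mat n n"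
  shows "adj (mat_exp A) = mat_exp (adj A)"
proof (rule eq_matI)
  fix i j assume "i < dim_row (mat_exp (adj A))" "j < dim_col (mat_exp (adj A))"
  then have i: "i < n" and j: "j < n" using A by (auto simp: mat_exp_def)
  have "adj (mat_exp A) $$ (i,j) = cnj (\<Sum>k. (A ^\<^sub>m k) $$ (j,i) / of_nat (fact k))"
    using A i j by (simp add: mat_exp_def)
  also have "\<dots> = (\<Sum>k. cnj ((A ^\<^sub>m k) $$ (j,i) / of_nat (fact k)))"
    using sums_unique[OF sums_cnj[THEN iffD2, OF summable_sums[OF summable_mat_exp_entry[OF A j i]]]]
    by simp
  also have "\<dots> = mat_exp (adj A) $$ (i,j)"
    using A i j by (simp add: mat_exp_def adj_pow[OF A, symmetric])
  finally show "adj (mat_exp A) $$ (i,j) = mat_exp (adj A) $$ (i,j)" .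
qed (use A in \<open>auto simp: mat_exp_def\<close>)

definition weyl_exponent ::
    "nat list \<Rightarrow> nat \<Rightarrow> (nat \<Rightarrow> complex mat) \<Rightarrow> (nat \<Rightarrow> real) \<Rightarrow> complex mat" where
  "weyl_exponent is m X \<xi> = foldr (\<lambda>i M. ((\<i> * complex_of_real (\<xi> i)) \<cdot>\<^sub>m X i) + M) is (0\<^sub>m m m)"

lemma weyl_exponent_carrier: "weyl_exponent is m X \<xi> \<in> carrier_mat m m"
  by (induction "is") (auto simp: weyl_exponent_def)

lemma adj_weyl_exponent:
  assumes "\<And>i. i \<in> set is \<Longrightarrow> X i \<in> carrier_mat m m \<and> adj (X i) = X i"
  shows "adj (weyl_exponent is m X \<xi>) = weyl_exponent is m X (\<lambda>k. - \<xi> k)"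
  using assms
proof (induction "is")
  case Nil
  then show ?case by (simp add: weyl_exponent_def)
next
  case (Cons i "is")
  then have Xi: "X i \<in> carrier_mat m m" "adj (X i) = X i" by auto
  have "adj (weyl_exponent (i # is) m X \<xi>)
      = adj ((\<i> * complex_of_real (\<xi> i)) \<cdot>\<^sub>m X i) + adj (weyl_exponent is m X \<xi>)"
    using adj_add[of _ m m] Xi weyl_exponent_carrier[of "is" m X \<xi>]
    by (simp add: weyl_exponent_def)
  also have "\<dots> = weyl_exponent (i # is) m X (\<lambda>k. - \<xi> k)"
    using Cons Xi by (simp add: adj_smult weyl_exponent_def)
  finally show ?case .
qed

lemma weyl_eq_mat_exp: "weyl d m X \<xi> = mat_exp (weyl_exponent [0..<d] m X \<xi>)"
  by (simp add: weyl_def weyl_exponent_def)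

lemma weyl_carrier: "weyl d m X \<xi> \<in> carrier_mat m m"
  using weyl_exponent_carrier[of "[0..<d]" m X \<xi>] by (auto simp: weyl_eq_mat_exp mat_exp_def)

lemma weyl_dim [simp]: "dim_row (weyl d m X \<xi>) = m" "dim_col (weyl d m X \<xi>) = m"
  using weyl_carrier by blast+

lemma adj_weyl: assumes "\<And>i. i < d \<Longrightarrow> X i \<in> carrier_mat m m \<and> hermitian (X i)"
  shows "adj (weyl d m X \<xi>) = weyl d m X (\<lambda>k. - \<xi> k)"
  using adj_mat_exp[OF weyl_exponent_carrier] adj_weyl_exponent[of "[0..<d]" X m \<xi>] assms
  by (simp add: weyl_eq_mat_exp hermitian_def)

lemma mtrace_adj_mult_sqrt:
  assumes M: "M \<in> carrier_mat m m" and R: "R \<in> carrier_mat m m" and hR: "adj R = R"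
  shows "mtrace (adj (M * R) * (M * R)) = mtrace ((R * R) * (adj M * M))"
proof -
  have "adj (M * R) * (M * R) = (R * (adj M * M)) * R"
    using adj_mult[OF M R] hR M R by (simp add: assoc_mult_mat_dim)
  then have "mtrace (adj (M * R) * (M * R)) = mtrace (R * (R * (adj M * M)))"
    using mtrace_mult_comm[OF mult_carrier_mat[OF R mult_carrier_mat[OF adj_carrier[OF M] M]] R]
    by simp
  then show ?thesis using M R by (simp add: assoc_mult_mat_dim)
qed

lemma adj_mult_self_diff:
  assumes A: "A \<in> carrier_mat m m" and B: "B \<in> carrier_mat m m" and V: "V \<in> carrier_mat m m"
  shows "adj (A * B - c \<cdot>\<^sub>m V) * (A * B - c \<cdot>\<^sub>m V) =
    adj B * (adj A * (A * B)) - c \<cdot>\<^sub>m (adj B * (adj A * V))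
    - (cnj c \<cdot>\<^sub>m (adj V * (A * B)) - (cnj c * c) \<cdot>\<^sub>m (adj V * V))"
proof -
  have "adj (A * B - c \<cdot>\<^sub>m V) = adj B * adj A - cnj c \<cdot>\<^sub>m adj V"
    using A B V by (simp add: adj_minus[of _ m m] adj_mult[of _ m m] adj_smult)
  then show ?thesis
    using A B V by (simp add: mat_arith_dim) (intro eq_matI, simp_all add: algebra_simps)
qed

lemma hs_norm_weyl_defect:
  assumes \<rho>: "\<rho> \<in> carrier_mat m m" "psd \<rho>"
    and X: "\<And>i. i < d \<Longrightarrow> X i \<in> carrier_mat m m \<and> hermitian (X i)"
  defines "E \<equiv> \<lambda>\<xi>s. mtrace (\<rho> * weyl_prod d m X \<xi>s)"
  shows "hs_norm (weyl d m X \<xi> * weyl d m X \<eta> * mat_sqrt \<rho>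
      - c \<cdot>\<^sub>m (weyl d m X (\<lambda>k. \<xi> k + \<eta> k) * mat_sqrt \<rho>))
    = sqrt (Re (E [\<lambda>k. - \<eta> k, \<lambda>k. - \<xi> k, \<xi>, \<eta>]
        - c * E [\<lambda>k. - \<eta> k, \<lambda>k. - \<xi> k, \<lambda>k. \<xi> k + \<eta> k]
        - (cnj c * E [\<lambda>k. - (\<xi> k + \<eta> k), \<xi>, \<eta>]
          - cnj c * c * E [\<lambda>k. - (\<xi> k + \<eta> k), \<lambda>k. \<xi> k + \<eta> k])))"
proof -
  let ?W = "weyl d m X"
  have R: "mat_sqrt \<rho> \<in> carrier_mat m m" "adj (mat_sqrt \<rho>) = mat_sqrt \<rho>"
    "mat_sqrt \<rho> * mat_sqrt \<rho> = \<rho>"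
    using mat_sqrt_spec[OF \<rho>] by (auto simp: psd_def hermitian_def)
  have W: "\<And>\<zeta>. ?W \<zeta> \<in> carrier_mat m m" by (rule weyl_carrier)
  let ?M = "?W \<xi> * ?W \<eta> - c \<cdot>\<^sub>m ?W (\<lambda>k. \<xi> k + \<eta> k)"
  have "?W \<xi> * ?W \<eta> * mat_sqrt \<rho> - c \<cdot>\<^sub>m (?W (\<lambda>k. \<xi> k + \<eta> k) * mat_sqrt \<rho>) = ?M * mat_sqrt \<rho>"
    using W[of \<xi>] W[of \<eta>] W[of "\<lambda>k. \<xi> k + \<eta> k"] R(1)
    by (simp add: minus_mult_distrib_mat_dim mult_smult_assoc_mat_dim)
  moreover have "?M \<in> carrier_mat m m" using W by (simp add: minus_carrier_mat)
  ultimately have "hs_norm (?W \<xi> * ?W \<eta> * mat_sqrt \<rho> - c \<cdot>\<^sub>m (?W (\<lambda>k. \<xi> k + \<eta> k) * mat_sqrt \<rho>))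
      = sqrt (Re (mtrace (\<rho> * (adj ?M * ?M))))"
    using mtrace_adj_mult_sqrt[of ?M m "mat_sqrt \<rho>"] R by (simp add: hs_norm_eq_sqrt_mtrace)
  also have "mtrace (\<rho> * (adj ?M * ?M)) = E [\<lambda>k. - \<eta> k, \<lambda>k. - \<xi> k, \<xi>, \<eta>]
        - c * E [\<lambda>k. - \<eta> k, \<lambda>k. - \<xi> k, \<lambda>k. \<xi> k + \<eta> k]
        - (cnj c * E [\<lambda>k. - (\<xi> k + \<eta> k), \<xi>, \<eta>]
          - cnj c * c * E [\<lambda>k. - (\<xi> k + \<eta> k), \<lambda>k. \<xi> k + \<eta> k])"
    unfolding adj_mult_self_diff[OF W W W] E_def weyl_prod_def
    using W \<rho> by (simp add: adj_weyl[OF X] mtrace_mult_minus mtrace_mult_smult)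
  finally show ?thesis .
qed

section \<open>Values of the Gaussian state\<close>

lemma bil_add_left: "bil d J (\<lambda>k. x k + y k) z = bil d J x z + bil d J y z"
  by (simp add: bil_def algebra_simps sum.distrib)

lemma bil_add_right: "bil d J x (\<lambda>k. y k + z k) = bil d J x y + bil d J x z"
  by (simp add: bil_def algebra_simps sum.distrib)

lemma bil_uminus_left: "bil d J (\<lambda>k. - x k) y = - bil d J x y"
  by (simp add: bil_def sum_negf)

lemma bil_uminus_right: "bil d J x (\<lambda>k. - y k) = - bil d J x y"
  by (simp add: bil_def sum_negf)

lemmas bil_linear = bil_add_left bil_add_right bil_uminus_left bil_uminus_right

lemma gauss_val_inverse_pair: "gauss_val d J [\<lambda>k. - \<xi> k, \<xi>] = 1"
  by (simp add: gauss_val_def lessThan_Suc eval_nat_numeral bil_linear)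

lemma gauss_val_inverse_pairs: "gauss_val d J [\<lambda>k. - \<eta> k, \<lambda>k. - \<xi> k, \<xi>, \<eta>] = 1"
  by (simp add: gauss_val_def lessThan_Suc eval_nat_numeral bil_linear) (simp add: field_simps)

lemma gauss_val_commutator_left:
  "gauss_val d J [\<lambda>k. - \<eta> k, \<lambda>k. - \<xi> k, \<lambda>k. \<xi> k + \<eta> k]
    = exp ((bil d J \<xi> \<eta> - bil d J \<eta> \<xi>) / 2)"
  by (simp add: gauss_val_def lessThan_Suc eval_nat_numeral bil_linear del: minus_add_distrib)
    (simp add: field_simps)

lemma gauss_val_commutator_right:
  "gauss_val d J [\<lambda>k. - (\<xi> k + \<eta> k), \<xi>, \<eta>] = exp (- ((bil d J \<xi> \<eta> - bil d J \<eta> \<xi>) / 2))"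
  by (simp add: gauss_val_def lessThan_Suc eval_nat_numeral bil_linear del: minus_add_distrib)
    (simp add: field_simps minus_divide_left)

lemma bil_antisym_hermitian:
  assumes J: "\<And>i j. i < d \<Longrightarrow> j < d \<Longrightarrow> J $$ (j,i) = cnj (J $$ (i,j))"
  shows "(bil d J x y - bil d J y x) / 2 =
    - \<i> * (\<Sum>i<d. \<Sum>j<d. complex_of_real (x i * Im (J $$ (i,j)) * y j))"
proof -
  have "bil d J y x = (\<Sum>i<d. \<Sum>j<d. complex_of_real (x i) * complex_of_real (y j) * J $$ (i,j))"
    unfolding bil_def by (subst sum.swap) (simp add: mult.commute)
  then have "bil d J x y - bil d J y x =
      (\<Sum>i<d. \<Sum>j<d. complex_of_real (x i) * complex_of_real (y j) * (J $$ (j,i) - J $$ (i,j)))"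
    by (simp add: bil_def right_diff_distrib sum_subtractf)
  also have "\<dots> = (\<Sum>i<d. \<Sum>j<d. -2 * \<i> * complex_of_real (x i * Im (J $$ (i,j)) * y j))"
  proof (intro sum.cong refl)
    fix i j assume "i \<in> {..<d}" "j \<in> {..<d}"
    then have diff: "J $$ (j,i) - J $$ (i,j) = -2 * \<i> * complex_of_real (Im (J $$ (i,j)))"
      using J[of i j] by (simp add: complex_eq_iff)
    show "complex_of_real (x i) * complex_of_real (y j) * (J $$ (j,i) - J $$ (i,j))
        = -2 * \<i> * complex_of_real (x i * Im (J $$ (i,j)) * y j)"
      unfolding diff by (simp add: algebra_simps)
  qed
  also have "\<dots> = -2 * \<i> * (\<Sum>i<d. \<Sum>j<d. complex_of_real (x i * Im (J $$ (i,j)) * y j))"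
    by (simp only: sum_distrib_left)
  finally show ?thesis by simp
qed

lemma gauss_val_commutators:
  fixes \<xi> \<eta> :: "nat \<Rightarrow> real"
  assumes J: "J \<in> carrier_mat d d" "psd J"
  defines "t \<equiv> \<Sum>i<d. \<Sum>j<d. \<xi> i * Im (J $$ (i,j)) * \<eta> j"
  shows "gauss_val d J [\<lambda>k. - \<eta> k, \<lambda>k. - \<xi> k, \<lambda>k. \<xi> k + \<eta> k] = cis (- t)"
    and "gauss_val d J [\<lambda>k. - (\<xi> k + \<eta> k), \<xi>, \<eta>] = cis t"
proof -
  have J_sym: "J $$ (j,i) = cnj (J $$ (i,j))" if "i < d" "j < d" for i j
    using J that adj_index[of j J i] by (simp add: psd_def hermitian_def)
  have "(bil d J \<xi> \<eta> - bil d J \<eta> \<xi>) / 2 = - \<i> * complex_of_real t"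
    using bil_antisym_hermitian[OF J_sym, where x = \<xi> and y = \<eta>] by (simp add: t_def)
  then show "gauss_val d J [\<lambda>k. - \<eta> k, \<lambda>k. - \<xi> k, \<lambda>k. \<xi> k + \<eta> k] = cis (- t)"
    and "gauss_val d J [\<lambda>k. - (\<xi> k + \<eta> k), \<xi>, \<eta>] = cis t"
    unfolding gauss_val_commutator_left gauss_val_commutator_right by (simp_all add: cis_conv_exp)
qed

theorem lemma7:
  fixes d :: nat and m :: "nat \<Rightarrow> nat"
    and X :: "nat \<Rightarrow> nat \<Rightarrow> complex mat" and \<rho> :: "nat \<Rightarrow> complex mat"
    and J :: "complex mat" and \<xi> \<eta> :: "nat \<Rightarrow> real"
  assumes rho: "\<And>n. \<rho> n \<in> carrier_mat (m n) (m n) \<and> is_state (\<rho> n)"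
    and obs: "\<And>n i. i < d \<Longrightarrow> X n i \<in> carrier_mat (m n) (m n) \<and> hermitian (X n i)"
    and J: "J \<in> carrier_mat d d" "psd J"
    and conv: "qconv d m X \<rho> J"
  shows "(\<lambda>n. hs_norm (weyl d (m n) (X n) \<xi> * weyl d (m n) (X n) \<eta> * mat_sqrt (\<rho> n)
            - exp (\<i> * (\<Sum>i<d. \<Sum>j<d. complex_of_real (\<xi> i * Im (J $$ (i,j)) * \<eta> j)))
              \<cdot>\<^sub>m (weyl d (m n) (X n) (\<lambda>k. \<xi> k + \<eta> k) * mat_sqrt (\<rho> n))))
         \<longlonglongrightarrow> 0"
proof -
  define t where "t = (\<Sum>i<d. \<Sum>j<d. \<xi> i * Im (J $$ (i,j)) * \<eta> j)"
  have c: "exp (\<i> * (\<Sum>i<d. \<Sum>j<d. complex_of_real (\<xi> i * Im (J $$ (i,j)) * \<eta> j))) = cis t"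
    unfolding t_def by (simp add: cis_conv_exp)
  define E where "E n \<xi>s = mtrace (\<rho> n * weyl_prod d (m n) (X n) \<xi>s)" for n \<xi>s
  have E: "(\<lambda>n. E n \<xi>s) \<longlonglongrightarrow> gauss_val d J \<xi>s" for \<xi>s
    using conv unfolding qconv_def E_def by blast
  have "(\<lambda>n. sqrt (Re (E n [\<lambda>k. - \<eta> k, \<lambda>k. - \<xi> k, \<xi>, \<eta>]
        - cis t * E n [\<lambda>k. - \<eta> k, \<lambda>k. - \<xi> k, \<lambda>k. \<xi> k + \<eta> k]
        - (cnj (cis t) * E n [\<lambda>k. - (\<xi> k + \<eta> k), \<xi>, \<eta>]
          - cnj (cis t) * cis t * E n [\<lambda>k. - (\<xi> k + \<eta> k), \<lambda>k. \<xi> k + \<eta> k]))))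
      \<longlonglongrightarrow> sqrt (Re (1 - cis t * cis (- t) - (cnj (cis t) * cis t - cnj (cis t) * cis t * 1)))"
    using E[of "[\<lambda>k. - \<eta> k, \<lambda>k. - \<xi> k, \<xi>, \<eta>]"]
      E[of "[\<lambda>k. - \<eta> k, \<lambda>k. - \<xi> k, \<lambda>k. \<xi> k + \<eta> k]"]
      E[of "[\<lambda>k. - (\<xi> k + \<eta> k), \<xi>, \<eta>]"] E[of "[\<lambda>k. - (\<xi> k + \<eta> k), \<lambda>k. \<xi> k + \<eta> k]"]
    unfolding gauss_val_inverse_pairs gauss_val_inverse_pair gauss_val_commutators[OF J, where \<xi> = \<xi> and \<eta> = \<eta>, folded t_def]
    by (intro tendsto_intros)
  also have "sqrt (Re (1 - cis t * cis (- t) - (cnj (cis t) * cis t - cnj (cis t) * cis t * 1))) = 0"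
    by (simp add: cis_cnj cis_mult)
  finally show ?thesis
    unfolding c using rho obs unfolding E_def
    by (subst hs_norm_weyl_defect) (auto simp: is_state_def)
qed

end
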